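(* Let $G=(V,E)$ be a finite graph with graphic matroid $M(G)$, and consider the matroid game on $M(G)$ with loss matrix for the row player equal to the identity matrix $I\in\mathbb{R}^{E\times E}$. Then there exists a symmetric Nash equilibrium if and only if every block of $G$ is uniformly dense.
   Context: The base polytope of a matroid with rank function $r$ on $E$ is $B(M)=\{x\ge0: x(S)\le r(S)\ \forall S\subseteq E,\ x(E)=r(E)\}$; for the graphic matroid this is the spanning tree polytope (convex hull of spanning forests that are maximal, i.e. bases). In the game, the row player chooses $x\in B(M)$ minimizing $x^TLy$, the column player chooses $y\in B(M)$ maximizing it; $(x,x)$ with $x\in B(M)$ is a symmetric Nash equilibrium if $x^TLz\le x^TLx\le z^TLx$ for all $z\in B(M)$. A block of $G$ is a maximal connected subgraph without a cut vertex. A graph $H$ is uniformly dense if $|F|/r(F)\le|E(H)|/r(E(H))$ for every $F\subseteq E(H)$ with $r(F)>0$, where $r$ is the graphic matroid rank ($r(F)$ = number of vertices incident to $F$ minus number of connected components of the subgraph formed by $F$). *)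

theory Defs
  imports Complex_Main
begin

text \<open>A finite loopless multigraph: vertex set V, edge set E, and an incidence
  map ends assigning to each edge its set of two distinct endpoints.\<close>

definition finite_graph :: "'v set \<Rightarrow> 'e set \<Rightarrow> ('e \<Rightarrow> 'v set) \<Rightarrow> bool" where
  "finite_graph V E ends \<longleftrightarrow> finite V \<and> finite E \<and>
     (\<forall>e\<in>E. ends e \<subseteq> V \<and> card (ends e) = 2)"

definition adj :: "('e \<Rightarrow> 'v set) \<Rightarrow> 'e set \<Rightarrow> ('v \<times> 'v) set" where
  "adj ends F = {(a, b). \<exists>e\<in>F. ends e = {a, b}}"

definition verts :: "('e \<Rightarrow> 'v set) \<Rightarrow> 'e set \<Rightarrow> 'v set" where
  "verts ends F = \<Union> (ends ` F)"

definition grank :: "('e \<Rightarrow> 'v set) \<Rightarrow> 'e set \<Rightarrow> nat" where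
  "grank ends F = card (verts ends F) - card (verts ends F // (adj ends F)\<^sup>+)"

definition base_polytope :: "'e set \<Rightarrow> ('e \<Rightarrow> 'v set) \<Rightarrow> ('e \<Rightarrow> real) set" where
  "base_polytope E ends = {x. (\<forall>e. e \<notin> E \<longrightarrow> x e = 0) \<and> (\<forall>e\<in>E. x e \<ge> 0)
      \<and> (\<forall>S\<subseteq>E. sum x S \<le> real (grank ends S))
      \<and> sum x E = real (grank ends E)}"

definition bilin :: "'e set \<Rightarrow> ('e \<Rightarrow> 'e \<Rightarrow> real) \<Rightarrow> ('e \<Rightarrow> real) \<Rightarrow> ('e \<Rightarrow> real) \<Rightarrow> real" where
  "bilin E L x y = (\<Sum>e\<in>E. \<Sum>f\<in>E. x e * L e f * y f)"

definition identity_matrix :: "'e \<Rightarrow> 'e \<Rightarrow> real" where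
  "identity_matrix e f = (if e = f then 1 else 0)"

definition symmetric_NE ::
  "'e set \<Rightarrow> ('e \<Rightarrow> 'v set) \<Rightarrow> ('e \<Rightarrow> 'e \<Rightarrow> real) \<Rightarrow> ('e \<Rightarrow> real) \<Rightarrow> bool" where
  "symmetric_NE E ends L x \<longleftrightarrow> x \<in> base_polytope E ends \<and>
     (\<forall>z\<in>base_polytope E ends. bilin E L x z \<le> bilin E L x x \<and> bilin E L x x \<le> bilin E L z x)"

definition is_subgraph :: "'v set \<Rightarrow> 'e set \<Rightarrow> ('e \<Rightarrow> 'v set) \<Rightarrow> 'v set \<Rightarrow> 'e set \<Rightarrow> bool" where
  "is_subgraph V E ends VH EH \<longleftrightarrow> VH \<subseteq> V \<and> EH \<subseteq> E \<and> (\<forall>e\<in>EH. ends e \<subseteq> VH)"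

definition connected_graph :: "('e \<Rightarrow> 'v set) \<Rightarrow> 'v set \<Rightarrow> 'e set \<Rightarrow> bool" where
  "connected_graph ends VH EH \<longleftrightarrow> VH \<noteq> {} \<and>
     (\<forall>a\<in>VH. \<forall>b\<in>VH. (a, b) \<in> (adj ends EH)\<^sup>*)"

definition has_cut_vertex :: "('e \<Rightarrow> 'v set) \<Rightarrow> 'v set \<Rightarrow> 'e set \<Rightarrow> bool" where
  "has_cut_vertex ends VH EH \<longleftrightarrow> (\<exists>v\<in>VH. \<exists>a\<in>VH - {v}. \<exists>b\<in>VH - {v}.
      (a, b) \<notin> (adj ends {e\<in>EH. v \<notin> ends e})\<^sup>*)"

definition is_block :: "'v set \<Rightarrow> 'e set \<Rightarrow> ('e \<Rightarrow> 'v set) \<Rightarrow> 'v set \<Rightarrow> 'e set \<Rightarrow> bool" where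
  "is_block V E ends VH EH \<longleftrightarrow>
     is_subgraph V E ends VH EH \<and> connected_graph ends VH EH \<and> \<not> has_cut_vertex ends VH EH \<and>
     (\<forall>VH' EH'. is_subgraph V E ends VH' EH' \<and> connected_graph ends VH' EH' \<and>
        \<not> has_cut_vertex ends VH' EH' \<and> VH \<subseteq> VH' \<and> EH \<subseteq> EH' \<longrightarrow> VH' = VH \<and> EH' = EH)"

definition uniformly_dense :: "('e \<Rightarrow> 'v set) \<Rightarrow> 'e set \<Rightarrow> bool" where
  "uniformly_dense ends EH \<longleftrightarrow> (\<forall>F\<subseteq>EH. grank ends F > 0 \<longrightarrow>
      real (card F) / real (grank ends F) \<le> real (card EH) / real (grank ends EH))"

end

theory Submission
  imports Defs "HOL-Library.Product_Order"
begin

text \<open>With the identity as loss matrix the payoff is the inner product, so (x, x) is a symmetric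
  equilibrium iff x lies in the base polytope and z \<mapsto> \<langle>x, z\<rangle> is constant on it.
  The rank of the graphic matroid is additive over the edge sets of the blocks, hence every
  base vector is tight on each block. Two edges of a block sharing a vertex v become parallel once
  the block edges avoiding v are contracted; swapping them in a greedy ordering yields two base
  vectors that differ only in these two coordinates, so an equilibrium is constant on every block.
  Tightness fixes this constant to r(B)/|B|, and the constraints x(F) \<le> r(F) then say exactly
  that B is uniformly dense. Conversely, if all blocks are uniformly dense, the vector with value
  r(B)/|B| on each block B is a base vector whose inner product with any base vector z is
  \<Sum>B r(B)/|B| \<cdot> z(B) = \<Sum>B r(B)^2/|B|, independently of z.\<close>

section \<open>Connectivity\<close>

lemma sym_adj: "sym (adj ends F)"
  by (auto simp: adj_def sym_def insert_commute)

lemma adj_rtrancl_sym: "(a, b) \<in> (adj ends F)\<^sup>* \<Longrightarrow> (b, a) \<in> (adj ends F)\<^sup>*"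
  using sym_rtrancl[OF sym_adj[of ends F]] by (simp add: sym_def)

lemma adj_rtrancl_mono: "F \<subseteq> G \<Longrightarrow> (a, b) \<in> (adj ends F)\<^sup>* \<Longrightarrow> (a, b) \<in> (adj ends G)\<^sup>*"
  using rtrancl_mono[of "adj ends F" "adj ends G"] by (auto simp: adj_def)

lemma adj_rtrancl_in_verts: "(a, b) \<in> (adj ends F)\<^sup>* \<Longrightarrow> a \<noteq> b \<Longrightarrow> a \<in> verts ends F"
  by (erule converse_rtranclE) (auto simp: adj_def verts_def)

lemma Image_rtrancl_adj_subset_verts:
  assumes "x \<in> verts ends F"
  shows "(adj ends F)\<^sup>* `` {x} \<subseteq> verts ends F"
proof
  fix y assume "y \<in> (adj ends F)\<^sup>* `` {x}"
  then have "(x, y) \<in> (adj ends F)\<^sup>*" by simp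
  then have "(y, x) \<in> (adj ends F)\<^sup>*" by (rule adj_rtrancl_sym)
  then show "y \<in> verts ends F"
    using assms adj_rtrancl_in_verts[of y x ends F] by (cases "y = x") auto
qed

lemma Image_rtrancl_adj_notin_verts: "x \<notin> verts ends F \<Longrightarrow> (adj ends F)\<^sup>* `` {x} = {x}"
  by (auto dest: adj_rtrancl_in_verts)

lemma adj_rtrancl_avoiding: "(a, v) \<in> (adj ends {g\<in>F. v \<notin> ends g})\<^sup>* \<Longrightarrow> a = v"
  by (erule rtranclE) (auto simp: adj_def)

lemma rtrancl_Image_eq:
  assumes "sym R" and xy: "(x, y) \<in> R\<^sup>*"
  shows "R\<^sup>* `` {y} = R\<^sup>* `` {x}"
proof -
  have "(y, x) \<in> R\<^sup>*" using assms sym_rtrancl[of R] by (simp add: sym_def)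
  with xy show ?thesis by (auto intro: rtrancl_trans)
qed

lemma rtrancl_insert_sym_pair:
  assumes "sym R"
  shows "(insert (c, d) (insert (d, c) R))\<^sup>* =
     R\<^sup>* \<union> {(x, y). (x, c) \<in> R\<^sup>* \<and> (d, y) \<in> R\<^sup>*} \<union> {(x, y). (x, d) \<in> R\<^sup>* \<and> (c, y) \<in> R\<^sup>*}"
proof -
  have "(x, y) \<in> R\<^sup>* \<Longrightarrow> (y, x) \<in> R\<^sup>*" for x y
    using sym_rtrancl[OF assms] by (simp add: sym_def)
  then show ?thesis unfolding rtrancl_insert by (auto intro: rtrancl_trans)
qed

lemma rtrancl_adj_insert:
  assumes "ends f = {c, d}"
  shows "(adj ends (insert f F))\<^sup>* = (adj ends F)\<^sup>* \<union>
     {(x, y). (x, c) \<in> (adj ends F)\<^sup>* \<and> (d, y) \<in> (adj ends F)\<^sup>*} \<union>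
     {(x, y). (x, d) \<in> (adj ends F)\<^sup>* \<and> (c, y) \<in> (adj ends F)\<^sup>*}"
proof -
  have "adj ends (insert f F) = insert (c, d) (insert (d, c) (adj ends F))"
    using assms by (auto simp: adj_def doubleton_eq_iff)
  then show ?thesis by (simp add: rtrancl_insert_sym_pair[OF sym_adj])
qed

lemma rtrancl_adj_insert_connected:
  assumes "ends f = {c, d}" and "(c, d) \<in> (adj ends F)\<^sup>*"
  shows "(adj ends (insert f F))\<^sup>* = (adj ends F)\<^sup>*"
  using assms(2) adj_rtrancl_sym[OF assms(2)] unfolding rtrancl_adj_insert[of ends f c d F, OF assms(1)]
  by (auto intro: rtrancl_trans)

lemma Image_rtrancl_adj_insert_disconnected:
  assumes cd: "ends f = {c, d}" and disconn: "(c, d) \<notin> (adj ends F)\<^sup>*"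
  defines "C x \<equiv> (adj ends F)\<^sup>* `` {x}"
  shows "(adj ends (insert f F))\<^sup>* `` {x} = (if x \<in> C c \<union> C d then C c \<union> C d else C x)"
proof -
  let ?R = "(adj ends F)\<^sup>*"
  note S_eq = rtrancl_adj_insert[of ends f c d F, OF cd]
  have sym: "(x, y) \<in> ?R \<Longrightarrow> (y, x) \<in> ?R" for x y by (rule adj_rtrancl_sym)
  have C_eq: "C y = C x" if "y \<in> C x" for x y
    using that rtrancl_Image_eq[OF sym_adj] by (simp add: C_def)
  consider "(x, c) \<in> ?R" "(x, d) \<notin> ?R" | "(x, d) \<in> ?R" "(x, c) \<notin> ?R"
    | "(x, c) \<notin> ?R" "(x, d) \<notin> ?R"
    using disconn sym by (blast intro: rtrancl_trans)
  then show ?thesis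
  proof cases
    case 1
    then have "x \<in> C c" "C x = C c" using sym C_eq by (auto simp: C_def)
    then show ?thesis using 1 unfolding S_eq by (auto simp: C_def)
  next
    case 2
    then have "x \<in> C d" "C x = C d" using sym C_eq by (auto simp: C_def)
    then show ?thesis using 2 unfolding S_eq by (auto simp: C_def)
  next
    case 3
    then have "x \<notin> C c \<union> C d" using sym by (auto simp: C_def)
    then show ?thesis using 3 unfolding S_eq by (auto simp: C_def)
  qed
qed

lemma adj_rtrancl_exchange:
  assumes e: "ends e = {a, b}" and f: "ends f = {c, d}"
    and closes: "(c, d) \<in> (adj ends (insert e P))\<^sup>*" and disconn: "(c, d) \<notin> (adj ends P)\<^sup>*"
  shows "(a, b) \<in> (adj ends (insert f P))\<^sup>*" and "(a, b) \<notin> (adj ends P)\<^sup>*"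
proof -
  let ?R = "(adj ends P)\<^sup>*"
  have sym: "(x, y) \<in> ?R \<Longrightarrow> (y, x) \<in> ?R" for x y by (rule adj_rtrancl_sym)
  note S_eq = rtrancl_adj_insert[of ends f c d P, OF f]
  consider "(c, a) \<in> ?R" "(b, d) \<in> ?R" | "(c, b) \<in> ?R" "(a, d) \<in> ?R"
    using closes disconn unfolding rtrancl_adj_insert[of ends e a b P, OF e] by blast
  then have "(a, b) \<in> (adj ends (insert f P))\<^sup>* \<and> (a, b) \<notin> ?R"
  proof cases
    case 1
    have "(a, c) \<in> ?R" "(d, b) \<in> ?R" using sym 1 by auto
    then have "(a, b) \<in> (adj ends (insert f P))\<^sup>*" unfolding S_eq by blast
    moreover have "(a, b) \<notin> ?R" using disconn rtrancl_trans[OF rtrancl_trans[OF 1(1)] 1(2)] by blast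
    ultimately show ?thesis ..
  next
    case 2
    then have "(a, b) \<in> (adj ends (insert f P))\<^sup>*" unfolding S_eq by blast
    moreover have "(a, b) \<notin> ?R"
      using disconn rtrancl_trans[OF rtrancl_trans[OF 2(1) sym] 2(2)] by blast
    ultimately show ?thesis ..
  qed
  then show "(a, b) \<in> (adj ends (insert f P))\<^sup>*" and "(a, b) \<notin> ?R" by auto
qed

lemma minimal_connecting_subset:
  assumes "finite F" and "(a, b) \<in> (adj ends F)\<^sup>*"
  obtains Q where "Q \<subseteq> F" "(a, b) \<in> (adj ends Q)\<^sup>*"
    "\<And>Q'. Q' \<subset> Q \<Longrightarrow> (a, b) \<notin> (adj ends Q')\<^sup>*"
proof -
  let ?C = "{Q. Q \<subseteq> F \<and> (a, b) \<in> (adj ends Q)\<^sup>*}"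
  have "finite ?C" using assms(1) by (intro finite_subset[of ?C "Pow F"]) auto
  moreover have "F \<in> ?C" using assms(2) by simp
  ultimately obtain Q where Q: "Q \<in> ?C" and min: "\<forall>Q'\<in>?C. Q' \<le> Q \<longrightarrow> Q = Q'"
    using finite_has_minimal[of ?C] by blast
  show thesis
  proof (rule that)
    show "Q \<subseteq> F" "(a, b) \<in> (adj ends Q)\<^sup>*" using Q by auto
    show "(a, b) \<notin> (adj ends Q')\<^sup>*" if "Q' \<subset> Q" for Q'
      using min Q that by blast
  qed
qed

section \<open>Biconnectivity\<close>

definition biconnected :: "('e \<Rightarrow> 'v set) \<Rightarrow> 'v set \<Rightarrow> 'e set \<Rightarrow> bool" where
  "biconnected ends VH EH \<longleftrightarrow> connected_graph ends VH EH \<and> \<not> has_cut_vertex ends VH EH"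

lemma biconnected_connected_avoiding:
  assumes sub: "\<forall>g\<in>EH. ends g \<subseteq> VH" and bc: "biconnected ends VH EH"
    and p: "p \<in> VH - {v}" and q: "q \<in> VH - {v}"
  shows "(p, q) \<in> (adj ends {g\<in>EH. v \<notin> ends g})\<^sup>*"
proof (cases "v \<in> VH")
  case True
  then show ?thesis using bc p q unfolding biconnected_def has_cut_vertex_def by blast
next
  case False
  then have "{g\<in>EH. v \<notin> ends g} = EH" using sub by blast
  then show ?thesis using bc p q unfolding biconnected_def connected_graph_def by simp
qed

lemma biconnected_extend:
  assumes sub: "\<forall>g\<in>EH. ends g \<subseteq> VH" and bc: "biconnected ends VH EH"
    and VK: "VH \<subseteq> VK" and EK: "EH \<subseteq> EK"
    and reach: "\<And>a v. a \<in> VK \<Longrightarrow> a \<noteq> v \<Longrightarrow>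
      \<exists>h\<in>VH - {v}. (a, h) \<in> (adj ends {g\<in>EK. v \<notin> ends g})\<^sup>*"
  shows "biconnected ends VK EK"
proof -
  let ?K = "\<lambda>v. adj ends {g\<in>EK. v \<notin> ends g}"
  have K_path: "(p, q) \<in> (?K v)\<^sup>*" if pq: "p \<in> VK - {v}" "q \<in> VK - {v}" for p q v
  proof -
    obtain hp where hp: "hp \<in> VH - {v}" "(p, hp) \<in> (?K v)\<^sup>*" using reach pq(1) by blast
    obtain hq where hq: "hq \<in> VH - {v}" "(q, hq) \<in> (?K v)\<^sup>*" using reach pq(2) by blast
    have "{g\<in>EH. v \<notin> ends g} \<subseteq> {g\<in>EK. v \<notin> ends g}" using EK by blast
    then have "(hp, hq) \<in> (?K v)\<^sup>*"
      by (rule adj_rtrancl_mono[OF _ biconnected_connected_avoiding[OF sub bc hp(1) hq(1)]])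
    then show ?thesis using hp(2) adj_rtrancl_sym[OF hq(2)] by (meson rtrancl_trans)
  qed
  obtain h0 where h0: "h0 \<in> VH" using bc unfolding biconnected_def connected_graph_def by blast
  have to_h0: "(a, h0) \<in> (adj ends EK)\<^sup>*" if a: "a \<in> VK" for a
  proof (cases "a = h0")
    case False
    then obtain h where h: "h \<in> VH" "(a, h) \<in> (?K h0)\<^sup>*" using reach[OF a] by blast
    have "(a, h) \<in> (adj ends EK)\<^sup>*" by (rule adj_rtrancl_mono[OF _ h(2)]) blast
    moreover have "(h, h0) \<in> (adj ends EK)\<^sup>*"
      using bc h(1) h0 unfolding biconnected_def connected_graph_def
      by (blast intro: adj_rtrancl_mono[OF EK])
    ultimately show ?thesis by (rule rtrancl_trans)
  qed simp
  have "(a, b) \<in> (adj ends EK)\<^sup>*" if "a \<in> VK" "b \<in> VK" for a b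
    using rtrancl_trans[OF to_h0[OF that(1)] adj_rtrancl_sym[OF to_h0[OF that(2)]]] .
  then have "connected_graph ends VK EK"
    unfolding connected_graph_def using h0 VK by blast
  moreover have "\<not> has_cut_vertex ends VK EK"
    unfolding has_cut_vertex_def using K_path by blast
  ultimately show ?thesis by (simp add: biconnected_def)
qed

lemma biconnected_Un:
  assumes sub1: "\<forall>g\<in>EH1. ends g \<subseteq> VH1" and bc1: "biconnected ends VH1 EH1"
    and sub2: "\<forall>g\<in>EH2. ends g \<subseteq> VH2" and bc2: "biconnected ends VH2 EH2"
    and ab: "a \<noteq> b" "a \<in> VH1 \<inter> VH2" "b \<in> VH1 \<inter> VH2"
  shows "biconnected ends (VH1 \<union> VH2) (EH1 \<union> EH2)"
proof (rule biconnected_extend[OF sub1 bc1])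
  fix p v assume p: "p \<in> VH1 \<union> VH2" "p \<noteq> v"
  show "\<exists>h\<in>VH1 - {v}. (p, h) \<in> (adj ends {g\<in>EH1 \<union> EH2. v \<notin> ends g})\<^sup>*"
  proof (cases "p \<in> VH1")
    case False
    obtain w where w: "w \<in> VH1 \<inter> VH2" "w \<noteq> v" using ab by blast
    have "(p, w) \<in> (adj ends {g\<in>EH2. v \<notin> ends g})\<^sup>*"
      using biconnected_connected_avoiding[OF sub2 bc2] p w False by blast
    then have "(p, w) \<in> (adj ends {g\<in>EH1 \<union> EH2. v \<notin> ends g})\<^sup>*"
      by (rule adj_rtrancl_mono[rotated]) blast
    then show ?thesis using w by blast
  qed (use p in auto)
qed auto

lemma adj_rtrancl_enter_closed_set:
  assumes closed: "\<And>w w' g. w \<in> D \<Longrightarrow> g \<in> Q \<Longrightarrow> v \<notin> ends g \<Longrightarrow> ends g = {w, w'} \<Longrightarrow> w' \<in> D"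
    and vD: "v \<notin> D" and xD: "x \<notin> D" and walk: "(x, w) \<in> (adj ends Q)\<^sup>*"
  shows "(w \<notin> D \<longrightarrow> (x, w) \<in> (adj ends {g\<in>Q. ends g \<inter> D = {}})\<^sup>*) \<and>
         (w \<in> D \<longrightarrow> (x, v) \<in> (adj ends {g\<in>Q. ends g \<inter> D = {}})\<^sup>*)"
  using walk
proof (induction rule: rtrancl_induct)
  case base
  then show ?case using xD by simp
next
  case (step w w')
  let ?Q' = "{g\<in>Q. ends g \<inter> D = {}}"
  obtain g where g: "g \<in> Q" "ends g = {w, w'}" using step(2) by (auto simp: adj_def)
  show ?case
  proof (cases "w \<in> D"; cases "w' \<in> D")
    assume "w \<in> D" "w' \<notin> D"
    then have "v = w'" using closed[OF _ g(1) _ g(2)] g(2) vD by auto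
    then show ?case using step(3) \<open>w \<in> D\<close> \<open>w' \<notin> D\<close> by simp
  next
    assume "w \<notin> D" "w' \<in> D"
    then have "v = w" using closed[of w' g w] g vD by (auto simp: insert_commute)
    then show ?case using step(3) \<open>w \<notin> D\<close> \<open>w' \<in> D\<close> by simp
  next
    assume "w \<notin> D" "w' \<notin> D"
    then have "(w, w') \<in> adj ends ?Q'" using g by (auto simp: adj_def)
    then show ?case using step(3) \<open>w \<notin> D\<close> \<open>w' \<notin> D\<close> by (simp add: rtrancl_into_rtrancl)
  qed (use step(3) in simp)
qed

lemma minimal_connecting_set_avoiding:
  assumes conn: "(x, y) \<in> (adj ends Q)\<^sup>*"
    and minQ: "\<And>Q'. Q' \<subset> Q \<Longrightarrow> (x, y) \<notin> (adj ends Q')\<^sup>*"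
    and u: "u \<in> verts ends Q" and uv: "v \<noteq> u"
  shows "(u, x) \<in> (adj ends {g\<in>Q. v \<notin> ends g})\<^sup>* \<or> (u, y) \<in> (adj ends {g\<in>Q. v \<notin> ends g})\<^sup>*"
proof (rule ccontr)
  let ?Qv = "{g\<in>Q. v \<notin> ends g}"
  define D where "D = (adj ends ?Qv)\<^sup>* `` {u}"
  define Q' where "Q' = {g\<in>Q. ends g \<inter> D = {}}"
  assume "\<not> ?thesis"
  then have xD: "x \<notin> D" and yD: "y \<notin> D" by (simp_all add: D_def)
  have vD: "v \<notin> D" using adj_rtrancl_avoiding[of u v] uv by (auto simp: D_def)
  have closed: "w' \<in> D" if "w \<in> D" "g \<in> Q" "v \<notin> ends g" "ends g = {w, w'}" for w w' g
  proof -
    have "(w, w') \<in> adj ends ?Qv" using that by (auto simp: adj_def)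
    then show ?thesis using that(1) by (auto simp: D_def intro: rtrancl_into_rtrancl)
  qed
  have "(x, y) \<in> (adj ends Q')\<^sup>*"
    using adj_rtrancl_enter_closed_set[OF closed vD xD conn] yD by (simp add: Q'_def)
  moreover obtain g0 where "g0 \<in> Q" "u \<in> ends g0" using u by (auto simp: verts_def)
  then have "Q' \<subset> Q" by (auto simp: Q'_def D_def)
  ultimately show False using minQ by blast
qed

lemma biconnected_add_ear:
  assumes sub: "\<forall>g\<in>EH. ends g \<subseteq> VH" and bc: "biconnected ends VH EH"
    and xV: "x \<in> VH" and yV: "y \<in> VH" and conn: "(x, y) \<in> (adj ends Q)\<^sup>*"
    and minQ: "\<And>Q'. Q' \<subset> Q \<Longrightarrow> (x, y) \<notin> (adj ends Q')\<^sup>*"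
  shows "biconnected ends (VH \<union> verts ends Q) (EH \<union> Q)"
proof (rule biconnected_extend[OF sub bc])
  fix a v assume a: "a \<in> VH \<union> verts ends Q" "a \<noteq> v"
  let ?Kv = "adj ends {g\<in>EH \<union> Q. v \<notin> ends g}"
  have mono: "(adj ends {g\<in>Q. v \<notin> ends g})\<^sup>* \<subseteq> ?Kv\<^sup>*"
    by (rule rtrancl_mono) (auto simp: adj_def)
  have end_reached: "\<exists>h\<in>VH - {v}. (a, h) \<in> ?Kv\<^sup>*"
    if "h \<in> VH" "(a, h) \<in> (adj ends {g\<in>Q. v \<notin> ends g})\<^sup>*" for h
  proof -
    have "h \<noteq> v" using adj_rtrancl_avoiding[of a v] that(2) a(2) by blast
    then show ?thesis using that mono by blast
  qed
  show "\<exists>h\<in>VH - {v}. (a, h) \<in> ?Kv\<^sup>*"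
  proof (cases "a \<in> VH")
    case False
    then have "a \<in> verts ends Q" using a by blast
    from minimal_connecting_set_avoiding[OF conn minQ this a(2)[symmetric]]
    show ?thesis using end_reached[OF xV] end_reached[OF yV] by blast
  qed (use a in auto)
qed auto

section \<open>Greedy vectors and modular set functions\<close>

text \<open>Edmonds' greedy vector of the ordering L: each element receives the marginal gain of r
  over A and its predecessors in L.\<close>
fun greedy :: "('e set \<Rightarrow> real) \<Rightarrow> 'e set \<Rightarrow> 'e list \<Rightarrow> 'e \<Rightarrow> real" where
  "greedy r A [] y = 0"
| "greedy r A (h # L) y = (if y = h then r (insert h A) - r A else greedy r (insert h A) L y)"

lemma greedy_notin: "y \<notin> set L \<Longrightarrow> greedy r A L y = 0"
  by (induction L arbitrary: A) auto

lemma greedy_append_notin: "y \<notin> set L1 \<Longrightarrow> greedy r A (L1 @ L2) y = greedy r (A \<union> set L1) L2 y"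
  by (induction L1 arbitrary: A) auto

lemma greedy_append_in: "y \<in> set L1 \<Longrightarrow> greedy r A (L1 @ L2) y = greedy r A (L1 @ L2') y"
  by (induction L1 arbitrary: A) auto

lemma sum_greedy: "distinct L \<Longrightarrow> sum (greedy r A L) (set L) = r (A \<union> set L) - r A"
proof (induction L arbitrary: A)
  case (Cons h L)
  have "sum (greedy r A (h # L)) (set L) = sum (greedy r (insert h A) L) (set L)"
    using Cons.prems by (intro sum.cong) auto
  with Cons show ?case by simp
qed simp

lemma greedy_nonneg:
  assumes "\<And>X h. X \<subseteq> U \<Longrightarrow> h \<in> U \<Longrightarrow> r X \<le> r (insert h X)"
  shows "A \<subseteq> U \<Longrightarrow> set L \<subseteq> U \<Longrightarrow> greedy r A L y \<ge> 0"
  using assms by (induction L arbitrary: A) auto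

text \<open>The extra base set A' is only there to make the induction go through; the greedy
  constraints x(T) \<le> r(T) are the case A = A' = {}.\<close>
lemma sum_greedy_le:
  assumes submod: "\<And>X Y h. X \<subseteq> Y \<Longrightarrow> Y \<subseteq> U \<Longrightarrow> h \<in> U \<Longrightarrow>
      r (insert h Y) - r Y \<le> r (insert h X) - r X"
  shows "distinct L \<Longrightarrow> A \<subseteq> U \<Longrightarrow> set L \<subseteq> U \<Longrightarrow> T \<subseteq> set L \<Longrightarrow> A' \<subseteq> A \<Longrightarrow>
     sum (greedy r A L) T \<le> r (A' \<union> T) - r A'"
proof (induction L arbitrary: A A' T)
  case (Cons h L)
  show ?case
  proof (cases "h \<in> T")
    case False
    then have T: "T \<subseteq> set L" using Cons.prems by auto
    have "sum (greedy r A (h # L)) T = sum (greedy r (insert h A) L) T"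
      using False by (intro sum.cong) auto
    also have "\<dots> \<le> r (A' \<union> T) - r A'"
      using Cons.IH[of "insert h A" T A'] Cons.prems T by auto
    finally show ?thesis .
  next
    case True
    define T' where "T' = T - {h}"
    have T': "T' \<subseteq> set L" "T = insert h T'" "h \<notin> T'"
      using Cons.prems True by (auto simp: T'_def)
    have "sum (greedy r A (h # L)) T = greedy r A (h # L) h + sum (greedy r A (h # L)) T'"
      using T' finite_subset[OF T'(1)] by simp
    also have "sum (greedy r A (h # L)) T' = sum (greedy r (insert h A) L) T'"
      using T' by (intro sum.cong) auto
    also have "\<dots> \<le> r (insert h A' \<union> T') - r (insert h A')"
      using Cons.IH[of "insert h A" T' "insert h A'"] Cons.prems T' by auto
    also have "greedy r A (h # L) h \<le> r (insert h A') - r A'"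
      using submod[of A' A h] Cons.prems by auto
    finally show ?thesis using T' by simp
  qed
qed simp

lemma modular_pairs_additive:
  fixes r :: "'e set \<Rightarrow> real"
  assumes md: "\<And>P e f. P \<subseteq> U \<Longrightarrow> e \<in> A \<Longrightarrow> f \<in> B \<Longrightarrow>
      r (insert e (insert f P)) + r P = r (insert e P) + r (insert f P)"
    and AU: "A \<subseteq> U" and BU: "B \<subseteq> U" and fA: "finite A" and fB: "finite B"
    and XA: "X \<subseteq> A" and YB: "Y \<subseteq> B"
  shows "r (X \<union> Y) + r {} = r X + r Y"
proof -
  have inner: "r (insert f (Z \<union> Y)) - r (Z \<union> Y) = r (insert f Y) - r Y"
    if "Z \<subseteq> A" "Y \<subseteq> B" "f \<in> B" for Z Y f
  proof -
    have "finite Z" using that fA finite_subset by blast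
    then show ?thesis using that(1)
    proof (induction Z rule: finite_induct)
      case empty
      then show ?case by simp
    next
      case (insert e Z)
      have PU: "Z \<union> Y \<subseteq> U" using insert.prems that AU BU by auto
      have "r (insert e (insert f (Z \<union> Y))) + r (Z \<union> Y) = r (insert e (Z \<union> Y)) + r (insert f (Z \<union> Y))"
        using md[OF PU _ that(3)] insert.prems by auto
      moreover have "r (insert f (Z \<union> Y)) - r (Z \<union> Y) = r (insert f Y) - r Y"
        using insert by auto
      ultimately show ?case by (simp add: insert_commute)
    qed
  qed
  have "finite Y" using YB fB finite_subset by blast
  then show ?thesis using YB
  proof (induction Y rule: finite_induct)
    case empty
    then show ?case by simp
  next
    case (insert f Y)
    have "r (X \<union> insert f Y) = r (insert f (X \<union> Y))" by simp
    also have "\<dots> = r (X \<union> Y) + (r (insert f Y) - r Y)"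
      using inner[OF XA, of Y f] insert.prems by auto
    finally show ?case using insert by simp
  qed
qed

section \<open>The rank of a graphic matroid\<close>

locale graph =
  fixes V :: "'v set" and E :: "'e set" and ends :: "'e \<Rightarrow> 'v set"
  assumes finite_graph: "finite_graph V E ends"
begin

lemma finite_E: "finite E" and finite_V: "finite V"
  using finite_graph by (simp_all add: finite_graph_def)

lemma ends_subset: "e \<in> E \<Longrightarrow> ends e \<subseteq> V"
  using finite_graph by (simp add: finite_graph_def)

lemma ends_doubleton: "e \<in> E \<Longrightarrow> \<exists>a b. a \<noteq> b \<and> ends e = {a, b}"
  using finite_graph by (force simp: finite_graph_def card_2_iff)

lemma ends_doubletonE:
  assumes "e \<in> E" and "v \<in> ends e"
  obtains u where "u \<noteq> v" and "ends e = {u, v}"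
proof -
  obtain a b where "a \<noteq> b" "ends e = {a, b}" using ends_doubleton[OF assms(1)] by blast
  with assms(2) that show thesis by (metis insert_commute insert_iff singletonD)
qed

lemma verts_subset: "F \<subseteq> E \<Longrightarrow> verts ends F \<subseteq> V"
  unfolding verts_def using ends_subset by blast

abbreviation rk :: "'e set \<Rightarrow> real" where
  "rk S \<equiv> real (grank ends S)"

lemma Image_trancl_adj_eq_rtrancl:
  assumes "F \<subseteq> E" and "x \<in> verts ends F"
  shows "(adj ends F)\<^sup>+ `` {x} = (adj ends F)\<^sup>* `` {x}"
proof -
  obtain g where g: "g \<in> F" "x \<in> ends g" using assms(2) unfolding verts_def by blast
  then obtain y where "ends g = {y, x}" using ends_doubletonE assms(1) by blast
  then have "(x, y) \<in> adj ends F" "(y, x) \<in> adj ends F"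
    using g by (auto simp: adj_def insert_commute)
  then have "(x, x) \<in> (adj ends F)\<^sup>+" by (meson r_into_trancl' trancl_into_trancl)
  then show ?thesis by (auto simp: rtrancl_eq_or_trancl)
qed

text \<open>Counting components over all of V instead of over the vertices incident to F adds
  one singleton component per isolated vertex to both terms of the difference.\<close>
lemma grank_eq_card_components:
  assumes "F \<subseteq> E"
  shows "grank ends F = card V - card ((\<lambda>x. (adj ends F)\<^sup>* `` {x}) ` V)"
proof -
  define W where "W = verts ends F"
  define C where "C x = (adj ends F)\<^sup>* `` {x}" for x
  have WV: "W \<subseteq> V" using verts_subset[OF assms] by (simp add: W_def)
  have finW: "finite W" using WV finite_V finite_subset by blast
  have "W // (adj ends F)\<^sup>+ = (\<lambda>x. (adj ends F)\<^sup>+ `` {x}) ` W"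
    by (auto simp: quotient_def)
  also have "\<dots> = C ` W"
    using Image_trancl_adj_eq_rtrancl[OF assms] by (intro image_cong) (simp_all add: C_def W_def)
  finally have rank: "grank ends F = card W - card (C ` W)"
    by (simp add: grank_def W_def)
  have isolated: "C x = {x}" if "x \<notin> W" for x
    using that Image_rtrancl_adj_notin_verts by (simp add: C_def W_def)
  have "C ` V = C ` W \<union> C ` (V - W)" using WV by blast
  moreover have "C ` W \<inter> C ` (V - W) = {}"
  proof -
    have False if "w \<in> W" "v \<in> V - W" "C w = C v" for w v
      using Image_rtrancl_adj_subset_verts[of w ends F] isolated[of v] that by (auto simp: C_def W_def)
    then show ?thesis by blast
  qed
  moreover have "inj_on C (V - W)" using isolated by (auto simp: inj_on_def)
  ultimately have "card (C ` V) = card (C ` W) + card (V - W)"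
    using finW finite_V by (simp add: card_Un_disjoint card_image)
  moreover have "card V = card W + card (V - W)"
    using WV finW card_mono[OF finite_V WV] by (simp add: card_Diff_subset)
  moreover have "card (C ` W) \<le> card W" using finW card_image_le by blast
  ultimately show ?thesis using rank by (simp add: C_def)
qed

lemma grank_insert:
  assumes F: "F \<subseteq> E" and f: "f \<in> E" and cd: "ends f = {c, d}"
  shows "grank ends (insert f F) = grank ends F + (if (c, d) \<in> (adj ends F)\<^sup>* then 0 else 1)"
proof -
  let ?R = "(adj ends F)\<^sup>*" and ?S = "(adj ends (insert f F))\<^sup>*"
  define C where "C x = ?R `` {x}" for x
  have C_eq: "C y = C x" if "y \<in> C x" for x y
    using that rtrancl_Image_eq[OF sym_adj] by (simp add: C_def)
  have in_C: "x \<in> C x" for x by (simp add: C_def)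
  have cdV: "c \<in> V" "d \<in> V" using ends_subset[OF f] cd by auto
  have rank_F: "grank ends F = card V - card (C ` V)"
    using grank_eq_card_components[OF F] by (simp add: C_def)
  have rank_fF: "grank ends (insert f F) = card V - card ((\<lambda>x. ?S `` {x}) ` V)"
    using grank_eq_card_components F f by simp
  show ?thesis
  proof (cases "(c, d) \<in> ?R")
    case True
    then show ?thesis using rank_F rank_fF rtrancl_adj_insert_connected[OF cd True] by (simp add: C_def)
  next
    case False
    define M where "M = C ` (V - (C c \<union> C d))"
    have "(\<lambda>x. ?S `` {x}) ` V = insert (C c \<union> C d) M"
      unfolding Image_rtrancl_adj_insert_disconnected[OF cd False] M_def C_def[symmetric]
      using cdV in_C by (auto simp: image_iff)
    moreover have "C ` V = insert (C c) (insert (C d) M)"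
      unfolding M_def using cdV C_eq by auto
    moreover have "C c \<notin> M" "C d \<notin> M" "C c \<union> C d \<notin> M"
    proof -
      have "C y \<noteq> C c \<and> C y \<noteq> C d \<and> C y \<noteq> C c \<union> C d" if "y \<notin> C c \<union> C d" for y
        using that in_C[of y] by auto
      then show "C c \<notin> M" "C d \<notin> M" "C c \<union> C d \<notin> M" unfolding M_def by fastforce+
    qed
    moreover have "C c \<noteq> C d" using False in_C[of d] by (auto simp: C_def)
    moreover have "finite M" using finite_V by (simp add: M_def)
    moreover have "card (C ` V) \<le> card V" using finite_V card_image_le by blast
    ultimately show ?thesis using rank_F rank_fF False by simp
  qed
qed

lemma grank_empty: "grank ends {} = 0"
  by (simp add: grank_def verts_def)

lemma grank_insert_ge: "F \<subseteq> E \<Longrightarrow> f \<in> E \<Longrightarrow> grank ends F \<le> grank ends (insert f F)"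
  using ends_doubleton grank_insert by (metis le_add1)

lemma grank_le_grank_Un:
  assumes "finite D" "D \<subseteq> E" "F \<subseteq> E"
  shows "grank ends F \<le> grank ends (D \<union> F)"
  using assms
proof (induction D rule: finite_induct)
  case (insert f D)
  then have "grank ends (D \<union> F) \<le> grank ends (insert f (D \<union> F))"
    by (intro grank_insert_ge) auto
  with insert show ?case by simp
qed simp

lemma grank_mono: "F \<subseteq> G \<Longrightarrow> G \<subseteq> E \<Longrightarrow> grank ends F \<le> grank ends G"
  using grank_le_grank_Un[of "G - F" F] finite_E finite_subset
  by (metis Diff_partition Diff_subset Un_commute dual_order.trans)

lemma grank_singleton: "e \<in> E \<Longrightarrow> grank ends {e} = 1"
  using ends_doubleton[of e] grank_insert[of "{}" e] grank_empty
  by (force simp: adj_def)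

lemma grank_pos: "F \<subseteq> E \<Longrightarrow> F \<noteq> {} \<Longrightarrow> grank ends F \<ge> 1"
  using grank_mono grank_singleton by (metis empty_subsetI insert_subset subsetD ex_in_conv)

lemma grank_submodular_insert:
  assumes "F \<subseteq> G" "G \<subseteq> E" "f \<in> E"
  shows "rk (insert f G) - rk G \<le> rk (insert f F) - rk F"
proof -
  obtain c d where "ends f = {c, d}" using ends_doubleton assms(3) by blast
  moreover have "(c, d) \<in> (adj ends F)\<^sup>* \<Longrightarrow> (c, d) \<in> (adj ends G)\<^sup>*"
    using adj_rtrancl_mono[OF assms(1)] .
  ultimately show ?thesis using grank_insert assms by (auto simp del: of_nat_add)
qed

lemma greedy_in_base_polytope:
  assumes "distinct L" "set L = E"
  shows "greedy rk {} L \<in> base_polytope E ends"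
  unfolding base_polytope_def
proof (intro CollectI conjI allI impI ballI)
  show "greedy rk {} L e = 0" if "e \<notin> E" for e
    using that assms by (simp add: greedy_notin)
  show "greedy rk {} L e \<ge> 0" if "e \<in> E" for e
    by (rule greedy_nonneg[where U = E]) (use assms grank_insert_ge in auto)
  show "sum (greedy rk {} L) S \<le> rk S" if "S \<subseteq> E" for S
    using sum_greedy_le[where U = E and r = rk and A' = "{}", OF grank_submodular_insert] assms that
    by (simp add: grank_empty)
  show "sum (greedy rk {} L) E = rk E"
    using sum_greedy[OF assms(1), of rk "{}"] assms by (simp add: grank_empty)
qed

section \<open>Blocks\<close>

lemma is_blockD:
  assumes "is_block V E ends VH EH"
  shows "VH \<subseteq> V" "EH \<subseteq> E" "\<forall>g\<in>EH. ends g \<subseteq> VH" "biconnected ends VH EH"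
  using assms unfolding is_block_def is_subgraph_def biconnected_def by auto

lemma block_maximal:
  assumes "is_block V E ends VH EH" "is_subgraph V E ends VH' EH'" "biconnected ends VH' EH'"
    "VH \<subseteq> VH'" "EH \<subseteq> EH'"
  shows "VH' = VH \<and> EH' = EH"
  using assms unfolding is_block_def biconnected_def by blast

lemma block_edges_eq:
  assumes b1: "is_block V E ends VH1 EH1" and b2: "is_block V E ends VH2 EH2"
    and e: "e \<in> EH1" "e \<in> EH2"
  shows "EH1 = EH2"
proof -
  have eE: "e \<in> E" using is_blockD(2)[OF b1] e by blast
  obtain a b where ab: "a \<noteq> b" "ends e = {a, b}" using ends_doubleton[OF eE] by blast
  have in1: "a \<in> VH1" "b \<in> VH1" using is_blockD(3)[OF b1] e ab by auto
  have in2: "a \<in> VH2" "b \<in> VH2" using is_blockD(3)[OF b2] e ab by auto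
  have bc: "biconnected ends (VH1 \<union> VH2) (EH1 \<union> EH2)"
    using biconnected_Un[OF is_blockD(3,4)[OF b1] is_blockD(3,4)[OF b2] ab(1)] in1 in2 by blast
  have sg: "is_subgraph V E ends (VH1 \<union> VH2) (EH1 \<union> EH2)"
    using is_blockD[OF b1] is_blockD[OF b2] unfolding is_subgraph_def by blast
  have "EH1 \<union> EH2 = EH1" using block_maximal[OF b1 sg bc] by blast
  moreover have "EH1 \<union> EH2 = EH2" using block_maximal[OF b2 sg bc] by blast
  ultimately show ?thesis by simp
qed

lemma biconnected_edge:
  assumes "e \<in> E"
  shows "biconnected ends (ends e) {e}"
proof -
  obtain a b where ab: "a \<noteq> b" "ends e = {a, b}" using ends_doubleton[OF assms] by blast
  have "(a, b) \<in> adj ends {e}" "(b, a) \<in> adj ends {e}" using ab by (auto simp: adj_def insert_commute)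
  then have c: "(p, q) \<in> (adj ends {e})\<^sup>*" if "p \<in> {a, b}" "q \<in> {a, b}" for p q
    using that by auto
  have "connected_graph ends (ends e) {e}" unfolding connected_graph_def using ab c by auto
  moreover have "\<not> has_cut_vertex ends (ends e) {e}" unfolding has_cut_vertex_def using ab by auto
  ultimately show ?thesis by (simp add: biconnected_def)
qed

lemma block_exists:
  assumes e: "e \<in> E"
  shows "\<exists>VH EH. is_block V E ends VH EH \<and> e \<in> EH"
proof -
  let ?S = "{(VH, EH). is_subgraph V E ends VH EH \<and> biconnected ends VH EH \<and> e \<in> EH}"
  have "finite ?S"
    using finite_V finite_E by (intro finite_subset[of ?S "Pow V \<times> Pow E"]) (auto simp: is_subgraph_def)
  moreover have "(ends e, {e}) \<in> ?S"
    using biconnected_edge[OF e] ends_subset[OF e] e by (auto simp: is_subgraph_def)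
  ultimately obtain VH EH where H: "(VH, EH) \<in> ?S" and max: "\<forall>p\<in>?S. (VH, EH) \<le> p \<longrightarrow> (VH, EH) = p"
    using finite_has_maximal[of ?S] by blast
  then have "is_block V E ends VH EH"
    unfolding is_block_def by (fastforce simp: biconnected_def)
  then show ?thesis using H by blast
qed

lemma block_contains_closing_edge:
  assumes blk: "is_block V E ends VH EH" and e: "e \<in> EH" and f: "f \<in> E" and P: "P \<subseteq> E"
    and cd: "ends f = {c, d}" and closes: "(c, d) \<in> (adj ends (insert e P))\<^sup>*"
    and disconn: "(c, d) \<notin> (adj ends P)\<^sup>*"
  shows "f \<in> EH"
proof -
  note bp = is_blockD[OF blk]
  obtain a b where ab: "a \<noteq> b" "ends e = {a, b}" using ends_doubleton[of e] bp(2) e by blast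
  have abV: "a \<in> VH" "b \<in> VH" using bp(3) e ab(2) by auto
  note ab_conn = adj_rtrancl_exchange[OF ab(2) cd closes disconn]
  have "finite (insert f P)" using P finite_subset[OF _ finite_E] by blast
  then obtain Q where Q: "Q \<subseteq> insert f P" "(a, b) \<in> (adj ends Q)\<^sup>*"
    and Q_min: "\<And>Q'. Q' \<subset> Q \<Longrightarrow> (a, b) \<notin> (adj ends Q')\<^sup>*"
    using minimal_connecting_subset[OF _ ab_conn(1)] by blast
  have "f \<in> Q"
  proof (rule ccontr)
    assume "f \<notin> Q"
    then have "Q \<subseteq> P" using Q(1) by blast
    then show False using adj_rtrancl_mono[OF _ Q(2)] ab_conn(2) by blast
  qed
  have "biconnected ends (VH \<union> verts ends Q) (EH \<union> Q)"
    by (rule biconnected_add_ear[OF bp(3,4) abV Q(2) Q_min])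
  moreover have "is_subgraph V E ends (VH \<union> verts ends Q) (EH \<union> Q)"
  proof -
    have "Q \<subseteq> E" using Q(1) P f by blast
    then show ?thesis using bp(1,2,3) verts_subset unfolding is_subgraph_def verts_def by blast
  qed
  ultimately have "EH \<union> Q = EH" using block_maximal[OF blk] by blast
  then show ?thesis using \<open>f \<in> Q\<close> by blast
qed

lemma grank_modular_block:
  assumes blk: "is_block V E ends VH EH" and e: "e \<in> EH" and f: "f \<in> E - EH" and P: "P \<subseteq> E"
  shows "rk (insert e (insert f P)) + rk P = rk (insert e P) + rk (insert f P)"
proof -
  have eP: "insert e P \<subseteq> E" using is_blockD(2)[OF blk] e P by blast
  obtain c d where cd: "ends f = {c, d}" using ends_doubleton f by blast
  have "(c, d) \<in> (adj ends (insert e P))\<^sup>* \<longleftrightarrow> (c, d) \<in> (adj ends P)\<^sup>*"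
  proof
    assume closes: "(c, d) \<in> (adj ends (insert e P))\<^sup>*"
    show "(c, d) \<in> (adj ends P)\<^sup>*"
    proof (rule ccontr)
      assume "(c, d) \<notin> (adj ends P)\<^sup>*"
      with block_contains_closing_edge[OF blk e _ P cd closes] f show False by blast
    qed
  qed (rule adj_rtrancl_mono[of P], blast)
  moreover have "grank ends (insert f (insert e P)) =
      grank ends (insert e P) + (if (c, d) \<in> (adj ends (insert e P))\<^sup>* then 0 else 1)"
    using grank_insert[OF eP _ cd] f by blast
  moreover have "grank ends (insert f P) =
      grank ends P + (if (c, d) \<in> (adj ends P)\<^sup>* then 0 else 1)"
    using grank_insert[OF P _ cd] f by blast
  ultimately show ?thesis by (simp add: insert_commute)
qed

lemma grank_split_block:
  assumes blk: "is_block V E ends VH EH" and S: "S \<subseteq> E"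
  shows "rk S = rk (S \<inter> EH) + rk (S - EH)"
proof -
  have EH: "EH \<subseteq> E" "finite EH"
    using is_blockD(2)[OF blk] finite_subset[OF _ finite_E] by auto
  have "rk ((S \<inter> EH) \<union> (S - EH)) + rk {} = rk (S \<inter> EH) + rk (S - EH)"
  proof (rule modular_pairs_additive[where U = E and A = EH and B = "E - EH"])
    show "rk (insert e (insert f P)) + rk P = rk (insert e P) + rk (insert f P)"
      if "P \<subseteq> E" "e \<in> EH" "f \<in> E - EH" for P e f
      using grank_modular_block[OF blk that(2,3,1)] .
  qed (use EH S finite_E in auto)
  then show ?thesis by (simp add: Int_Diff_Un grank_empty)
qed

definition blocks :: "'e set set" where
  "blocks = {EH. (\<exists>VH. is_block V E ends VH EH) \<and> EH \<noteq> {}}"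
  \<comment> \<open>an isolated vertex forms a block without edges\<close>

lemma blocks_subset: "B \<in> blocks \<Longrightarrow> B \<subseteq> E"
  unfolding blocks_def using is_blockD(2) by blast

lemma finite_blocks: "finite blocks"
  using blocks_subset finite_E by (intro finite_subset[of blocks "Pow E"]) auto

lemma blocks_disjoint: "B1 \<in> blocks \<Longrightarrow> B2 \<in> blocks \<Longrightarrow> B1 \<noteq> B2 \<Longrightarrow> B1 \<inter> B2 = {}"
  unfolding blocks_def using block_edges_eq by blast

lemma blocks_cover: "e \<in> E \<Longrightarrow> \<exists>B\<in>blocks. e \<in> B"
  unfolding blocks_def using block_exists by blast

lemma grank_split_blocks:
  assumes "finite \<F>" "\<F> \<subseteq> blocks" "S \<subseteq> E"
  shows "rk S = (\<Sum>B\<in>\<F>. rk (S \<inter> B)) + rk (S - \<Union>\<F>)"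
  using assms
proof (induction \<F> rule: finite_induct)
  case (insert B \<F>)
  have B: "B \<in> blocks" using insert.prems(1) by blast
  have disj: "B \<inter> \<Union>\<F> = {}"
    using blocks_disjoint[OF B] insert.prems(1) insert.hyps(2) by blast
  from B obtain VH where "is_block V E ends VH B" by (auto simp: blocks_def)
  then have "rk (S - \<Union>\<F>) = rk ((S - \<Union>\<F>) \<inter> B) + rk ((S - \<Union>\<F>) - B)"
    by (rule grank_split_block) (use insert.prems(2) in blast)
  also have "(S - \<Union>\<F>) \<inter> B = S \<inter> B" using disj by blast
  also have "(S - \<Union>\<F>) - B = S - \<Union>(insert B \<F>)" by blast
  finally have "rk (S - \<Union>\<F>) = rk (S \<inter> B) + rk (S - \<Union>(insert B \<F>))" .
  moreover have "rk S = (\<Sum>B\<in>\<F>. rk (S \<inter> B)) + rk (S - \<Union>\<F>)"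
    using insert.IH insert.prems by blast
  ultimately show ?case using insert.hyps by (simp add: add.assoc)
qed simp

lemma grank_sum_blocks:
  assumes "S \<subseteq> E"
  shows "rk S = (\<Sum>B\<in>blocks. rk (S \<inter> B))"
proof -
  have "S - \<Union>blocks = {}" using assms blocks_cover by blast
  then have "rk (S - \<Union>blocks) = 0" by (simp only: grank_empty)
  then show ?thesis using grank_split_blocks[OF finite_blocks order_refl assms] by simp
qed

lemma sum_blocks: "S \<subseteq> E \<Longrightarrow> sum h S = (\<Sum>B\<in>blocks. sum h (S \<inter> B))"
proof -
  assume S: "S \<subseteq> E"
  have "S = (\<Union>B\<in>blocks. S \<inter> B)" using S blocks_cover by blast
  moreover have "sum h (\<Union>B\<in>blocks. S \<inter> B) = (\<Sum>B\<in>blocks. sum h (S \<inter> B))"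
    using finite_blocks blocks_disjoint S finite_subset[OF _ finite_E]
    by (intro sum.UNION_disjoint) blast+
  ultimately show ?thesis by simp
qed

text \<open>Rank is additive over blocks, so the inequalities x(B) \<le> r(B) sum to the equation x(E) = r(E),
  which forces each of them to be tight.\<close>
lemma base_polytope_block_tight:
  assumes z: "z \<in> base_polytope E ends" and B: "B \<in> blocks"
  shows "sum z B = rk B"
proof -
  have le: "sum z B' \<le> rk B'" if "B' \<in> blocks" for B'
    using z blocks_subset[OF that] by (simp add: base_polytope_def)
  have "(\<Sum>B\<in>blocks. rk B - sum z B) = rk E - sum z E"
    using grank_sum_blocks[of E] sum_blocks[of E z] blocks_subset
    by (simp add: sum_subtractf Int_absorb1)
  also have "\<dots> = 0" using z by (simp add: base_polytope_def)
  finally have "\<forall>B\<in>blocks. rk B - sum z B = 0"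
    using sum_nonneg_eq_0_iff[OF finite_blocks, of "\<lambda>B. rk B - sum z B"] le by simp
  then show ?thesis using B by simp
qed

section \<open>Symmetric equilibria\<close>

lemma bilin_identity_matrix: "bilin E identity_matrix x y = (\<Sum>e\<in>E. x e * y e)"
proof -
  have "x e * identity_matrix e f * y f = (if f = e then x e * y e else 0)" for e f
    by (simp add: identity_matrix_def)
  then show ?thesis using finite_E by (simp add: bilin_def)
qed

lemma symmetric_NE_identity_iff:
  "symmetric_NE E ends identity_matrix x \<longleftrightarrow> x \<in> base_polytope E ends \<and>
     (\<forall>z\<in>base_polytope E ends. (\<Sum>e\<in>E. x e * z e) = (\<Sum>e\<in>E. x e * x e))"
proof -
  have "(\<Sum>e\<in>E. z e * x e) = (\<Sum>e\<in>E. x e * z e)" for z by (simp add: mult.commute)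
  then show ?thesis
    unfolding symmetric_NE_def bilin_identity_matrix
    by (metis (no_types, lifting) order_antisym order_refl)
qed

text \<open>Two elements e, f that are parallel after contracting P can be given the values (1, 0) and
  (0, 1) by greedy vectors agreeing everywhere else: list P first, then e and f in either order.\<close>
lemma greedy_swap_vectors:
  assumes e: "e \<in> E" and f: "f \<in> E" and ef: "e \<noteq> f" and P: "P \<subseteq> E" "e \<notin> P" "f \<notin> P"
    and rank_e: "rk (insert e P) = rk P + 1" and rank_f: "rk (insert f P) = rk P + 1"
    and rank_ef: "rk (insert e (insert f P)) = rk P + 1"
  obtains g1 g2 where "g1 \<in> base_polytope E ends" "g2 \<in> base_polytope E ends"
    "g1 e = 1" "g1 f = 0" "g2 e = 0" "g2 f = 1" "\<forall>y\<in>E - {e, f}. g1 y = g2 y"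
proof -
  obtain Lp where Lp: "distinct Lp" "set Lp = P"
    using finite_distinct_list finite_subset[OF P(1) finite_E] by blast
  obtain Lr where Lr: "distinct Lr" "set Lr = E - P - {e, f}"
    using finite_distinct_list finite_E by (metis finite_Diff)
  define g1 where "g1 = greedy rk {} (Lp @ e # f # Lr)"
  define g2 where "g2 = greedy rk {} (Lp @ f # e # Lr)"
  have "g1 \<in> base_polytope E ends" "g2 \<in> base_polytope E ends"
    unfolding g1_def g2_def using Lp Lr P e f ef by (auto intro!: greedy_in_base_polytope)
  moreover have "g1 e = 1" "g1 f = 0" "g2 e = 0" "g2 f = 1"
    unfolding g1_def g2_def using Lp P ef rank_e rank_f rank_ef
    by (simp_all add: greedy_append_notin insert_commute)
  moreover have "g1 y = g2 y" if "y \<in> E - {e, f}" for y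
  proof (cases "y \<in> set Lp")
    case True
    then show ?thesis unfolding g1_def g2_def by (rule greedy_append_in)
  next
    case False
    then show ?thesis unfolding g1_def g2_def using that
      by (simp add: greedy_append_notin insert_commute)
  qed
  ultimately show thesis using that by blast
qed

text \<open>Contracting the block edges that avoid v makes e and f parallel: their other ends u and w
  stay connected around v because v is not a cut vertex of the block.\<close>
lemma adjacent_block_edges_parallel:
  assumes blk: "is_block V E ends VH EH" and e: "e \<in> EH" and f: "f \<in> EH"
    and ve: "v \<in> ends e" and vf: "v \<in> ends f"
  obtains P where "P \<subseteq> E" "e \<notin> P" "f \<notin> P" "rk (insert e P) = rk P + 1"
    "rk (insert f P) = rk P + 1" "rk (insert e (insert f P)) = rk P + 1"
proof -
  note bp = is_blockD[OF blk]
  have eE: "e \<in> E" and fE: "f \<in> E" using bp e f by auto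
  obtain u where u: "u \<noteq> v" "ends e = {u, v}" using ends_doubletonE[OF eE ve] by blast
  obtain w where w: "w \<noteq> v" "ends f = {w, v}" using ends_doubletonE[OF fE vf] by blast
  define P where "P = {g\<in>EH. v \<notin> ends g}"
  have PE: "P \<subseteq> E" and efP: "e \<notin> P" "f \<notin> P" using bp ve vf by (auto simp: P_def)
  have "u \<in> VH - {v}" "w \<in> VH - {v}" using bp(3) e f u w by auto
  then have uw: "(u, w) \<in> (adj ends P)\<^sup>*"
    unfolding P_def by (rule biconnected_connected_avoiding[OF bp(3,4)])
  have uv: "(u, v) \<notin> (adj ends P)\<^sup>*" and wv: "(w, v) \<notin> (adj ends P)\<^sup>*"
    using u(1) w(1) adj_rtrancl_avoiding[of u v ends EH] adj_rtrancl_avoiding[of w v ends EH]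
    by (auto simp: P_def)
  have "(u, w) \<in> (adj ends (insert f P))\<^sup>*" by (rule adj_rtrancl_mono[OF _ uw]) blast
  moreover have "(w, v) \<in> adj ends (insert f P)" using w by (auto simp: adj_def)
  ultimately have uv_f: "(u, v) \<in> (adj ends (insert f P))\<^sup>*" by (rule rtrancl_into_rtrancl)
  have fP: "insert f P \<subseteq> E" using PE fE by blast
  have rank_f: "rk (insert f P) = rk P + 1" using grank_insert[OF PE fE w(2)] wv by simp
  show thesis
  proof (rule that[OF PE efP])
    show "rk (insert e P) = rk P + 1" using grank_insert[OF PE eE u(2)] uv by simp
    show "rk (insert f P) = rk P + 1" by (fact rank_f)
    show "rk (insert e (insert f P)) = rk P + 1"
      using grank_insert[OF fP eE u(2)] uv_f rank_f by simp
  qed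
qed

lemma adjacent_block_edges_equal:
  assumes x_const: "\<forall>z\<in>base_polytope E ends. (\<Sum>y\<in>E. x y * z y) = c"
    and blk: "is_block V E ends VH EH" and e: "e \<in> EH" and f: "f \<in> EH"
    and ve: "v \<in> ends e" and vf: "v \<in> ends f"
  shows "x e = x f"
proof (cases "e = f")
  case False
  have eE: "e \<in> E" and fE: "f \<in> E" using is_blockD(2)[OF blk] e f by auto
  obtain P where P: "P \<subseteq> E" "e \<notin> P" "f \<notin> P" and ranks: "rk (insert e P) = rk P + 1"
      "rk (insert f P) = rk P + 1" "rk (insert e (insert f P)) = rk P + 1"
    using adjacent_block_edges_parallel[OF blk e f ve vf] .
  obtain g1 g2 where g: "g1 \<in> base_polytope E ends" "g2 \<in> base_polytope E ends"
    "g1 e = 1" "g1 f = 0" "g2 e = 0" "g2 f = 1" and agree: "\<forall>y\<in>E - {e, f}. g1 y = g2 y"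
    using greedy_swap_vectors[OF eE fE False P ranks] .
  have split: "(\<Sum>y\<in>E. x y * g y) = x e * g e + x f * g f + (\<Sum>y\<in>E - {e, f}. x y * g y)" for g
    using sum.subset_diff[of "{e, f}" E "\<lambda>y. x y * g y"] finite_E eE fE False by simp
  have "(\<Sum>y\<in>E - {e, f}. x y * g1 y) = (\<Sum>y\<in>E - {e, f}. x y * g2 y)"
    using agree by simp
  moreover have "(\<Sum>y\<in>E. x y * g1 y) = (\<Sum>y\<in>E. x y * g2 y)" using x_const g(1,2) by simp
  ultimately show ?thesis using split[of g1] split[of g2] g(3-6) by simp
qed simp

lemma constant_on_block:
  assumes x_const: "\<forall>z\<in>base_polytope E ends. (\<Sum>y\<in>E. x y * z y) = c"
    and blk: "is_block V E ends VH EH" and e: "e \<in> EH" and f: "f \<in> EH"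
  shows "x f = x e"
proof -
  note bp = is_blockD[OF blk]
  note adj_eq = adjacent_block_edges_equal[OF x_const blk]
  obtain a a' where a: "ends e = {a, a'}" using ends_doubleton bp(2) e by blast
  obtain c c' where c: "ends f = {c, c'}" using ends_doubleton bp(2) f by blast
  have "a \<in> VH" "c \<in> VH" using bp(3) e f a c by auto
  then have "(a, c) \<in> (adj ends EH)\<^sup>*" using bp(4) unfolding biconnected_def connected_graph_def by blast
  then have "\<forall>g\<in>EH. c \<in> ends g \<longrightarrow> x g = x e"
  proof (induction rule: rtrancl_induct)
    case base
    show ?case using adj_eq[OF e, of _ a] a by auto
  next
    case (step w w')
    obtain h where h: "h \<in> EH" "ends h = {w, w'}" using step(2) by (auto simp: adj_def)
    then have "x h = x e" using step(3) by auto
    then show ?case using adj_eq[OF h(1), of _ w'] h(2) by auto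
  qed
  then show ?thesis using f c by auto
qed

lemma uniformly_dense_iff_density_bound:
  assumes EH: "EH \<subseteq> E" "EH \<noteq> {}"
  shows "uniformly_dense ends EH \<longleftrightarrow>
    (\<forall>F\<subseteq>EH. real (card F) * (rk EH / real (card EH)) \<le> rk F)"
proof -
  have cEH: "real (card EH) > 0" using EH finite_subset[OF _ finite_E] by (auto simp: card_gt_0_iff)
  have rEH: "rk EH > 0" using grank_pos[OF EH] by simp
  have equiv: "real (card F) / rk F \<le> real (card EH) / rk EH \<longleftrightarrow>
      real (card F) * (rk EH / real (card EH)) \<le> rk F" if "rk F > 0" for F
    using that cEH rEH by (simp add: field_simps)
  have empty: "F = {}" if "F \<subseteq> EH" "\<not> rk F > 0" for F
    using grank_pos[of F] that EH by force
  show ?thesis unfolding uniformly_dense_def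
  proof (intro iffI allI impI)
    fix F assume ud: "\<forall>F\<subseteq>EH. 0 < grank ends F \<longrightarrow>
        real (card F) / rk F \<le> real (card EH) / rk EH" and F: "F \<subseteq> EH"
    show "real (card F) * (rk EH / real (card EH)) \<le> rk F"
    proof (cases "rk F > 0")
      case True
      then show ?thesis using ud F equiv by simp
    qed (use empty[OF F] in simp)
  qed (use equiv in simp)
qed

lemma symmetric_NE_imp_uniformly_dense:
  assumes NE: "symmetric_NE E ends identity_matrix x" and blk: "is_block V E ends VH EH"
  shows "uniformly_dense ends EH"
proof (cases "EH = {}")
  case False
  have EH: "EH \<subseteq> E" using is_blockD(2)[OF blk] .
  have "EH \<in> blocks" using blk False unfolding blocks_def by blast
  obtain e0 where e0: "e0 \<in> EH" using False by blast
  have xB: "x \<in> base_polytope E ends"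
    and x_const: "\<forall>z\<in>base_polytope E ends. (\<Sum>y\<in>E. x y * z y) = (\<Sum>y\<in>E. x y * x y)"
    using NE unfolding symmetric_NE_identity_iff by blast+
  have sum_x: "sum x F = real (card F) * x e0" if "F \<subseteq> EH" for F
  proof -
    have "sum x F = sum (\<lambda>_. x e0) F"
      using constant_on_block[OF x_const blk e0] that by (intro sum.cong) auto
    then show ?thesis by simp
  qed
  have "real (card EH) * x e0 = rk EH"
    using sum_x[of EH] base_polytope_block_tight[OF xB \<open>EH \<in> blocks\<close>] by simp
  then have "x e0 = rk EH / real (card EH)"
    using False finite_subset[OF EH finite_E] by (simp add: field_simps)
  moreover have "sum x F \<le> rk F" if "F \<subseteq> EH" for F
    using xB that EH unfolding base_polytope_def by blast
  ultimately have "\<forall>F\<subseteq>EH. real (card F) * (rk EH / real (card EH)) \<le> rk F"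
    using sum_x by simp
  then show ?thesis using uniformly_dense_iff_density_bound[OF EH False] by blast
qed (simp add: uniformly_dense_def grank_empty)

definition block_of :: "'e \<Rightarrow> 'e set" where
  "block_of e = (THE B. B \<in> blocks \<and> e \<in> B)"

lemma block_of_eq: "B \<in> blocks \<Longrightarrow> e \<in> B \<Longrightarrow> block_of e = B"
  unfolding block_of_def using blocks_disjoint by (intro the_equality) blast+

definition density_vector :: "'e \<Rightarrow> real" where
  "density_vector e = (if e \<in> E then rk (block_of e) / real (card (block_of e)) else 0)"

lemma sum_density_vector_block:
  assumes "B \<in> blocks"
  shows "sum density_vector (S \<inter> B) = real (card (S \<inter> B)) * (rk B / real (card B))"
proof -
  have "density_vector e = rk B / real (card B)" if "e \<in> S \<inter> B" for e
    using that assms blocks_subset block_of_eq by (auto simp: density_vector_def)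
  then show ?thesis by simp
qed

lemma density_vector_in_base_polytope:
  assumes UD: "\<forall>VH EH. is_block V E ends VH EH \<longrightarrow> uniformly_dense ends EH"
  shows "density_vector \<in> base_polytope E ends"
  unfolding base_polytope_def
proof (intro CollectI conjI allI impI ballI)
  have block_bound: "sum density_vector (S \<inter> B) \<le> rk (S \<inter> B)" if "B \<in> blocks" for B S
  proof -
    have "uniformly_dense ends B" "B \<noteq> {}" using UD that unfolding blocks_def by blast+
    then show ?thesis
      using uniformly_dense_iff_density_bound[OF blocks_subset[OF that]] sum_density_vector_block[OF that]
      by simp
  qed
  show "sum density_vector S \<le> rk S" if "S \<subseteq> E" for S
  proof -
    have "sum density_vector S = (\<Sum>B\<in>blocks. sum density_vector (S \<inter> B))"
      by (rule sum_blocks[OF that])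
    also have "\<dots> \<le> (\<Sum>B\<in>blocks. rk (S \<inter> B))" by (intro sum_mono block_bound)
    also have "\<dots> = rk S" using grank_sum_blocks[OF that] by simp
    finally show ?thesis .
  qed
  have "sum density_vector B = rk B" if "B \<in> blocks" for B
    using sum_density_vector_block[OF that, of B] that finite_subset[OF blocks_subset finite_E]
    unfolding blocks_def by simp
  then show "sum density_vector E = rk E"
    using sum_blocks[of E density_vector] grank_sum_blocks[of E] blocks_subset
    by (simp add: Int_absorb1)
qed (auto simp: density_vector_def)

lemma density_vector_pairing:
  assumes "z \<in> base_polytope E ends"
  shows "(\<Sum>e\<in>E. density_vector e * z e) = (\<Sum>B\<in>blocks. rk B / real (card B) * rk B)"
proof -
  have "(\<Sum>e\<in>E. density_vector e * z e) = (\<Sum>B\<in>blocks. \<Sum>e\<in>B. density_vector e * z e)"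
    using sum_blocks[of E] blocks_subset by (simp add: Int_absorb1)
  also have "\<dots> = (\<Sum>B\<in>blocks. rk B / real (card B) * sum z B)"
  proof (rule sum.cong)
    fix B assume B: "B \<in> blocks"
    have "(\<Sum>e\<in>B. density_vector e * z e) = (\<Sum>e\<in>B. rk B / real (card B) * z e)"
      using B blocks_subset block_of_eq by (intro sum.cong) (auto simp: density_vector_def)
    then show "(\<Sum>e\<in>B. density_vector e * z e) = rk B / real (card B) * sum z B"
      by (simp add: sum_distrib_left)
  qed simp
  also have "\<dots> = (\<Sum>B\<in>blocks. rk B / real (card B) * rk B)"
    using base_polytope_block_tight[OF assms] by simp
  finally show ?thesis .
qed

lemma symmetric_NE_density_vector:
  assumes "\<forall>VH EH. is_block V E ends VH EH \<longrightarrow> uniformly_dense ends EH"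
  shows "symmetric_NE E ends identity_matrix density_vector"
  using density_vector_in_base_polytope[OF assms] density_vector_pairing
  unfolding symmetric_NE_identity_iff by simp

end

theorem corollary10:
  fixes V :: "'v set" and E :: "'e set" and ends :: "'e \<Rightarrow> 'v set"
  assumes "finite_graph V E ends"
  shows "(\<exists>x. symmetric_NE E ends identity_matrix x) \<longleftrightarrow>
         (\<forall>VH EH. is_block V E ends VH EH \<longrightarrow> uniformly_dense ends EH)"
proof -
  interpret graph V E ends by (rule graph.intro) (fact assms)
  show ?thesis using symmetric_NE_imp_uniformly_dense symmetric_NE_density_vector by blast
qed

end
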